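(* Assume $\mu_n\to0$ and $n^{1/2}\mu_n\to\infty$, and suppose $\theta_n\in\mathbb R$ satisfies $\theta_n/\mu_n\to\zeta\in\mathbb R\cup\{-\infty,\infty\}$. 1. If $\zeta=0$ and $n^{1/2}\theta_n\to\nu\in\mathbb R$, then $F_{A,n,\theta_n}$ converges weakly to the cdf $\mathbf 1(\cdot\ge-\nu)$ (pointmass at $-\nu$). 2. If $-\infty<\zeta<0$, or if $\zeta=0$ and $n^{1/2}\theta_n\to-\infty$, or if $\zeta=-\infty$ and $n^{1/2}\mu_n^2/\theta_n\to-\infty$, then $F_{A,n,\theta_n}(x)\to0$ for every $x\in\mathbb R$. If $0<\zeta<\infty$, or if $\zeta=0$ and $n^{1/2}\theta_n\to\infty$, or if $\zeta=\infty$ and $n^{1/2}\mu_n^2/\theta_n\to\infty$, then $F_{A,n,\theta_n}(x)\to1$ for every $x\in\mathbb R$. 3. If $|\zeta|=\infty$ and $n^{1/2}\mu_n^2/\theta_n\to r\in\mathbb R$, then $F_{A,n,\theta_n}$ converges weakly to the cdf $\Phi(\cdot+r)$.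
   Context: Gaussian location model: for each sample size $n$, $y_1,\dots,y_n$ are i.i.d. $N(\theta,1)$ with $\theta\in\mathbb R$ unknown; $\bar y$ is their mean. $P_{n,\theta}$ denotes the probability governing a sample of size $n$ when $\theta$ is the true parameter. Given a nonrandom tuning parameter $\mu_n>0$, the adaptive LASSO estimator is $\hat\theta_A=0$ if $|\bar y|\le\mu_n$ and $\hat\theta_A=\bar y-\mu_n^2/\bar y$ if $|\bar y|>\mu_n$. $F_{A,n,\theta}$ denotes the cdf of $n^{1/2}(\hat\theta_A-\theta)$ under $P_{n,\theta}$. $\Phi$ is the standard normal cdf. *)

theory Defs
  imports "HOL-Probability.Probability"
begin

text \<open>Adaptive LASSO estimator in the Gaussian location model, as a function of the
  tuning parameter mu and of the sample mean yb.\<close>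
definition adaptive_lasso :: "real \<Rightarrow> real \<Rightarrow> real" where
  "adaptive_lasso mu yb = (if \<bar>yb\<bar> \<le> mu then 0 else yb - mu\<^sup>2 / yb)"

definition sample_law :: "nat \<Rightarrow> real \<Rightarrow> (nat \<Rightarrow> real) measure" where
  "sample_law n \<theta> = PiM {..<n} (\<lambda>_. density lborel (normal_density \<theta> 1))"

definition sample_mean :: "nat \<Rightarrow> (nat \<Rightarrow> real) \<Rightarrow> real" where
  "sample_mean n y = (\<Sum>i<n. y i) / real n"

definition F_A :: "real \<Rightarrow> nat \<Rightarrow> real \<Rightarrow> real \<Rightarrow> real" where
  "F_A mu n \<theta> x = measure (sample_law n \<theta>)
     {y \<in> space (sample_law n \<theta>). sqrt (real n) * (adaptive_lasso mu (sample_mean n y) - \<theta>) \<le> x}"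

definition Phi :: "real \<Rightarrow> real" where
  "Phi x = cdf std_normal_distribution x"

end

theory Submission imports Defs begin

(* Put m_n = sqrt n * mu_n and a_n = sqrt n * theta_n.  The standardized sample mean
   Z = sqrt n * (ybar - theta_n) is exactly N(0,1), and sqrt n * (thetahat_A - theta_n)
   equals lasso_error m_n a_n Z, where
     lasso_error m a z = -a             if |a + z| <= m,
                         z - m^2/(a+z)  otherwise.
   Hence F_{A,n,theta_n}(x) = P(lasso_error m_n a_n Z <= x) with one fixed Z ~ N(0,1), and
   by dominated convergence it suffices to know, for almost every z, whether eventually
   lasso_error m_n a_n z <= x. *)


subsection \<open>The sampling law of the standardized mean\<close>

lemma sample_law_prob_space: "prob_space (sample_law n \<theta>)"
  unfolding sample_law_def
  by (intro prob_space_PiM prob_space_normal_density) auto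

lemma sample_coordinate_distr:
  assumes "i < n"
  shows "distr (sample_law n \<theta>) borel (\<lambda>y. y i) = density lborel (normal_density \<theta> 1)"
proof -
  have "distr (sample_law n \<theta>) borel (\<lambda>y. y i)
      = distr (sample_law n \<theta>) (density lborel (normal_density \<theta> 1)) (\<lambda>y. y i)"
    by (rule distr_cong) auto
  also have "\<dots> = density lborel (normal_density \<theta> 1)"
    unfolding sample_law_def
    by (rule distr_PiM_component) (auto intro: prob_space_normal_density assms)
  finally show ?thesis .
qed

lemma sample_coordinate_normal:
  assumes "i < n"
  shows "distributed (sample_law n \<theta>) lborel (\<lambda>y. y i) (normal_density \<theta> 1)"
proof -
  have "distr (sample_law n \<theta>) lborel (\<lambda>y. y i) = distr (sample_law n \<theta>) borel (\<lambda>y. y i)"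
    by (rule distr_cong) auto
  moreover have "i \<in> {..<n}" using assms by simp
  then have "(\<lambda>y. y i) \<in> borel_measurable (sample_law n \<theta>)"
    unfolding sample_law_def by measurable
  ultimately show ?thesis
    unfolding distributed_def using sample_coordinate_distr[OF assms] by auto
qed

lemma sample_coordinates_indep:
  assumes "n > 0"
  shows "prob_space.indep_vars (sample_law n \<theta>) (\<lambda>i. borel) (\<lambda>i y. y i) {..<n}"
proof -
  interpret prob_space "sample_law n \<theta>" by (rule sample_law_prob_space)
  have rv: "random_variable borel (\<lambda>y. y i)" if "i \<in> {..<n}" for i
    using that unfolding sample_law_def by measurable
  have "distr (sample_law n \<theta>) (\<Pi>\<^sub>M i\<in>{..<n}. borel) (\<lambda>x. \<lambda>i\<in>{..<n}. x i)
      = distr (sample_law n \<theta>) (sample_law n \<theta>) (\<lambda>x. x)"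
  proof (rule distr_cong)
    show "sets (\<Pi>\<^sub>M i\<in>{..<n}. borel) = sets (sample_law n \<theta>)"
      unfolding sample_law_def by (intro sets_PiM_cong) auto
  qed (auto simp: sample_law_def space_PiM PiE_def extensional_def)
  also have "\<dots> = sample_law n \<theta>" by simp
  also have "\<dots> = (\<Pi>\<^sub>M i\<in>{..<n}. distr (sample_law n \<theta>) borel (\<lambda>x. x i))"
    unfolding sample_law_def[of n \<theta>]
    by (rule PiM_cong) (auto simp: sample_coordinate_distr[unfolded sample_law_def])
  finally show ?thesis
    using assms by (subst indep_vars_iff_distr_eq_PiM') (auto intro: rv)
qed

lemma standardized_mean_normal:
  assumes n: "n > 0"
  shows "distributed (sample_law n \<theta>) lborel (\<lambda>y. sqrt (real n) * (sample_mean n y - \<theta>))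
           std_normal_density"
proof -
  interpret prob_space "sample_law n \<theta>" by (rule sample_law_prob_space)
  define s where "s = sqrt (real n)"
  have s: "s > 0" "real n = s * s" using n by (auto simp: s_def)
  have "distributed (sample_law n \<theta>) lborel (\<lambda>y. \<Sum>i\<in>{..<n}. y i)
      (normal_density (\<Sum>i\<in>{..<n}. \<theta>) (sqrt (\<Sum>i\<in>{..<n}. 1\<^sup>2)))"
    using n by (intro sum_indep_normal sample_coordinates_indep sample_coordinate_normal) auto
  then have sum: "distributed (sample_law n \<theta>) lborel (\<lambda>y. \<Sum>i<n. y i)
      (normal_density (real n * \<theta>) s)"
    by (simp add: s_def)
  have "distributed (sample_law n \<theta>) lborel (\<lambda>y. - s * \<theta> + 1 / s * (\<Sum>i<n. y i))
     (normal_density (- s * \<theta> + 1 / s * (real n * \<theta>)) (\<bar>1 / s\<bar> * s))"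
    using s by (intro normal_density_affine[OF sum]) auto
  moreover have "- s * \<theta> + 1 / s * (real n * \<theta>) = 0" "\<bar>1 / s\<bar> * s = 1"
    using s by (auto simp: field_simps)
  moreover have "- s * \<theta> + 1 / s * (\<Sum>i<n. y i) = s * (sample_mean n y - \<theta>)" for y
    unfolding sample_mean_def s(2) using s(1) by (simp add: field_simps)
  ultimately show ?thesis by (simp add: s_def)
qed


subsection \<open>The rescaled estimation error\<close>

text \<open>With m = sqrt n * mu, a = sqrt n * theta and z = sqrt n * (ybar - theta), the value of
  sqrt n * (thetahat_A - theta).\<close>
definition lasso_error :: "real \<Rightarrow> real \<Rightarrow> real \<Rightarrow> real" where
  "lasso_error m a z = (if \<bar>a + z\<bar> \<le> m then - a else z - m\<^sup>2 / (a + z))"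

lemma lasso_error_measurable[measurable]: "lasso_error m a \<in> borel_measurable borel"
  unfolding lasso_error_def by measurable

text \<open>The rescaling identity: writing ybar = theta + z/s with s = sqrt n turns the estimator
  error into lasso_error.\<close>
lemma scaled_adaptive_lasso_error:
  assumes s: "s > 0"
  shows "s * (adaptive_lasso \<mu> (\<theta> + z / s) - \<theta>) = lasso_error (s * \<mu>) (s * \<theta>) z"
proof -
  define w where "w = \<theta> + z / s"
  have sw: "s * w = s * \<theta> + z" using s by (simp add: w_def field_simps)
  have thr: "(\<bar>w\<bar> \<le> \<mu>) = (\<bar>s * \<theta> + z\<bar> \<le> s * \<mu>)"
    using s by (simp add: sw[symmetric] abs_mult)
  have "s * \<mu>\<^sup>2 / w = (s * \<mu>)\<^sup>2 / (s * \<theta> + z)"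
    unfolding sw[symmetric] using s by (simp add: power2_eq_square)
  then show ?thesis
    using thr sw unfolding adaptive_lasso_def lasso_error_def w_def[symmetric]
    by (simp add: algebra_simps)
qed

lemma F_A_eq_std_normal:
  assumes n: "n > 0"
  shows "F_A \<mu> n \<theta> x = measure std_normal_distribution
           {z. lasso_error (sqrt (real n) * \<mu>) (sqrt (real n) * \<theta>) z \<le> x}"
proof -
  define M where "M = sample_law n \<theta>"
  define Z where "Z = (\<lambda>y. sqrt (real n) * (sample_mean n y - \<theta>))"
  define A where "A = {z. lasso_error (sqrt (real n) * \<mu>) (sqrt (real n) * \<theta>) z \<le> x}"
  have Z: "distributed M lborel Z std_normal_density"
    unfolding M_def Z_def by (rule standardized_mean_normal[OF n])
  have sn: "sqrt (real n) > 0" using n by simp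
  have mean: "sample_mean n y = \<theta> + Z y / sqrt (real n)" for y
    using sn unfolding Z_def by simp
  have "F_A \<mu> n \<theta> x = measure M (Z -` A \<inter> space M)"
    unfolding F_A_def M_def[symmetric] A_def
    by (rule arg_cong[where f="measure M"]) (auto simp: mean scaled_adaptive_lasso_error[OF sn])
  also have "\<dots> = measure (distr M lborel Z) A"
    using Z by (subst measure_distr) (auto simp: distributed_def A_def)
  also have "\<dots> = measure std_normal_distribution A"
    using Z by (simp add: distributed_def)
  finally show ?thesis unfolding A_def .
qed


text \<open>Dominated convergence for events: if almost every point eventually lies in A n
  exactly when it lies in B, then the probabilities converge.\<close>
lemma measure_tendsto_of_AE_eventually:
  assumes "prob_space M"
    and sets: "\<And>n. A n \<in> sets M" "B \<in> sets M"
    and ev: "AE z in M. eventually (\<lambda>n. z \<in> A n \<longleftrightarrow> z \<in> B) sequentially"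
  shows "(\<lambda>n. measure M (A n)) \<longlonglongrightarrow> measure M B"
proof -
  interpret prob_space M by fact
  have "(\<lambda>n. integral\<^sup>L M (indicator (A n) :: _ \<Rightarrow> real)) \<longlonglongrightarrow> integral\<^sup>L M (indicator B)"
  proof (rule integral_dominated_convergence[where w="\<lambda>_. 1"])
    show "AE z in M. (\<lambda>n. indicator (A n) z :: real) \<longlonglongrightarrow> indicator B z"
      using ev
    proof eventually_elim
      case (elim z)
      then have "eventually (\<lambda>n. indicator (A n) z = (indicator B z :: real)) sequentially"
        by eventually_elim (simp add: indicator_def)
      then show ?case by (rule tendsto_eventually)
    qed
  qed (use sets in \<open>auto simp: indicator_def\<close>)
  then show ?thesis using sets by (simp add: Int_absorb2 sets.sets_into_space)
qed

lemma std_normal_prob_space: "prob_space std_normal_distribution"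
  by (rule prob_space_normal_density) simp

lemma F_A_tendsto_of_AE_eventually:
  assumes ev: "AE z in std_normal_distribution. eventually (\<lambda>n.
      lasso_error (sqrt (real n) * \<mu> n) (sqrt (real n) * \<theta> n) z \<le> x \<longleftrightarrow> Q z) sequentially"
    and Q: "{z. Q z} \<in> sets borel"
  shows "(\<lambda>n. F_A (\<mu> n) n (\<theta> n) x) \<longlonglongrightarrow> measure std_normal_distribution {z. Q z}"
proof -
  have "(\<lambda>n. measure std_normal_distribution
      {z. lasso_error (sqrt (real n) * \<mu> n) (sqrt (real n) * \<theta> n) z \<le> x})
     \<longlonglongrightarrow> measure std_normal_distribution {z. Q z}"
    using ev Q by (intro measure_tendsto_of_AE_eventually std_normal_prob_space) auto
  moreover have "eventually (\<lambda>n. measure std_normal_distribution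
      {z. lasso_error (sqrt (real n) * \<mu> n) (sqrt (real n) * \<theta> n) z \<le> x}
      = F_A (\<mu> n) n (\<theta> n) x) sequentially"
    unfolding eventually_sequentially by (auto intro!: exI[of _ 1] simp: F_A_eq_std_normal)
  ultimately show ?thesis by (rule Lim_transform_eventually)
qed

lemma eventually_le_iff_of_tendsto:
  fixes f :: "'a \<Rightarrow> real"
  assumes "(f \<longlongrightarrow> L) F" "L \<noteq> x"
  shows "eventually (\<lambda>n. f n \<le> x \<longleftrightarrow> L \<le> x) F"
proof (cases "L < x")
  case True
  show ?thesis using order_tendstoD(2)[OF assms(1) True] by eventually_elim (use True in simp)
next
  case False
  then have "x < L" using assms(2) by simp
  show ?thesis using order_tendstoD(1)[OF assms(1) \<open>x < L\<close>] by eventually_elim (use \<open>x < L\<close> in simp)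
qed

lemma F_A_tendsto_of_pointwise:
  assumes lim: "\<And>z. (\<lambda>n. lasso_error (sqrt (real n) * \<mu> n) (sqrt (real n) * \<theta> n) z) \<longlonglongrightarrow> g z"
    and g: "g \<in> borel_measurable borel"
    and no_atom: "AE z in std_normal_distribution. g z \<noteq> x"
  shows "(\<lambda>n. F_A (\<mu> n) n (\<theta> n) x) \<longlonglongrightarrow> measure std_normal_distribution {z. g z \<le> x}"
proof (rule F_A_tendsto_of_AE_eventually)
  show "AE z in std_normal_distribution. eventually (\<lambda>n.
      lasso_error (sqrt (real n) * \<mu> n) (sqrt (real n) * \<theta> n) z \<le> x \<longleftrightarrow> g z \<le> x) sequentially"
    using no_atom by eventually_elim (rule eventually_le_iff_of_tendsto[OF lim])
qed (use g in measurable)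

lemma F_A_tendsto_0_of_error_at_top:
  assumes "\<And>z. filterlim (\<lambda>n. lasso_error (sqrt (real n) * \<mu> n) (sqrt (real n) * \<theta> n) z)
                  at_top sequentially"
  shows "(\<lambda>n. F_A (\<mu> n) n (\<theta> n) x) \<longlonglongrightarrow> 0"
proof -
  have "(\<lambda>n. F_A (\<mu> n) n (\<theta> n) x) \<longlonglongrightarrow> measure std_normal_distribution {z. False}"
  proof (rule F_A_tendsto_of_AE_eventually)
    show "AE z in std_normal_distribution. eventually (\<lambda>n.
        lasso_error (sqrt (real n) * \<mu> n) (sqrt (real n) * \<theta> n) z \<le> x \<longleftrightarrow> False) sequentially"
      using assms by (intro AE_I2) (auto simp: filterlim_at_top_dense not_le elim: eventually_mono)
  qed simp
  then show ?thesis by simp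
qed

lemma F_A_tendsto_1_of_error_at_bot:
  assumes "\<And>z. filterlim (\<lambda>n. lasso_error (sqrt (real n) * \<mu> n) (sqrt (real n) * \<theta> n) z)
                  at_bot sequentially"
  shows "(\<lambda>n. F_A (\<mu> n) n (\<theta> n) x) \<longlonglongrightarrow> 1"
proof -
  have "(\<lambda>n. F_A (\<mu> n) n (\<theta> n) x) \<longlonglongrightarrow> measure std_normal_distribution {z. True}"
  proof (rule F_A_tendsto_of_AE_eventually)
    show "AE z in std_normal_distribution. eventually (\<lambda>n.
        lasso_error (sqrt (real n) * \<mu> n) (sqrt (real n) * \<theta> n) z \<le> x \<longleftrightarrow> True) sequentially"
      using assms by (intro AE_I2) (auto simp: filterlim_at_bot)
  qed simp
  then show ?thesis using prob_space.prob_space[OF std_normal_prob_space] by simp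
qed

text \<open>N(0,1) has no atoms; this makes the normal limit law continuous everywhere.\<close>
lemma std_normal_no_atoms: "AE z in std_normal_distribution. z \<noteq> c"
proof -
  have "AE z in lborel. 0 < ennreal (std_normal_density z) \<longrightarrow> z \<noteq> c"
    using AE_lborel_singleton[of c] by (rule eventually_mono) simp
  then show ?thesis by (subst AE_density) simp_all
qed


subsection \<open>Deterministic asymptotics of the error\<close>

text \<open>If a_n converges, the thresholding region eventually contains every fixed z, so the
  error is eventually -a_n.\<close>
lemma lasso_error_tendsto_const:
  fixes m a :: "nat \<Rightarrow> real"
  assumes m: "filterlim m at_top sequentially" and a: "a \<longlonglongrightarrow> \<nu>"
  shows "(\<lambda>n. lasso_error (m n) (a n) z) \<longlonglongrightarrow> - \<nu>"
proof -
  have "(\<lambda>n. a n + z) \<longlonglongrightarrow> \<nu> + z" using a by (intro tendsto_intros)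
  then have "eventually (\<lambda>n. \<bar>a n + z\<bar> < \<bar>\<nu> + z\<bar> + 1) sequentially"
    by (rule order_tendstoD(2)[OF tendsto_rabs]) simp
  moreover have "eventually (\<lambda>n. \<bar>\<nu> + z\<bar> + 1 \<le> m n) sequentially"
    using m by (simp add: filterlim_at_top)
  ultimately have "eventually (\<lambda>n. lasso_error (m n) (a n) z = - a n) sequentially"
    by eventually_elim (simp add: lasso_error_def)
  moreover have "(\<lambda>n. - a n) \<longlonglongrightarrow> - \<nu>" using a by (intro tendsto_intros)
  ultimately show ?thesis using tendsto_cong by fastforce
qed

lemma lasso_error_minus: "lasso_error m (- a) (- z) = - lasso_error m a z"
proof -
  have e: "- a + - z = - (a + z)" by simp
  show ?thesis unfolding lasso_error_def e abs_minus_cancel divide_minus_right by simp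
qed

text \<open>If a_n -> -oo but a_n / m_n^2 -> 0, both branches of the error tend to +oo: the
  thresholded value -a_n, and z - m_n^2/(a_n + z) since (a_n + z)/m_n^2 -> 0 from below.\<close>
lemma lasso_error_at_top:
  fixes m a :: "nat \<Rightarrow> real"
  assumes m: "filterlim m at_top sequentially" and a: "filterlim a at_bot sequentially"
    and q: "(\<lambda>n. a n / (m n)\<^sup>2) \<longlonglongrightarrow> 0"
  shows "filterlim (\<lambda>n. lasso_error (m n) (a n) z) at_top sequentially"
proof -
  have m2: "filterlim (\<lambda>n. (m n)\<^sup>2) at_infinity sequentially"
    by (rule filterlim_at_top_imp_at_infinity, rule filterlim_pow_at_top[OF _ m]) simp
  have "(\<lambda>n. a n / (m n)\<^sup>2 + z / (m n)\<^sup>2) \<longlonglongrightarrow> 0 + 0"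
    by (intro tendsto_add q tendsto_divide_0[OF tendsto_const m2])
  then have q': "(\<lambda>n. (a n + z) / (m n)\<^sup>2) \<longlonglongrightarrow> 0" by (simp add: add_divide_distrib)
  have "eventually (\<lambda>n. a n \<le> - z - 1) sequentially" using a by (simp add: filterlim_at_bot)
  moreover have "eventually (\<lambda>n. m n > 0) sequentially"
    using m by (simp add: filterlim_at_top_dense)
  ultimately have "eventually (\<lambda>n. (a n + z) / (m n)\<^sup>2 < 0) sequentially"
    by eventually_elim (simp add: divide_neg_pos)
  with q' have "filterlim (\<lambda>n. (a n + z) / (m n)\<^sup>2) (at_left 0) sequentially"
    by (rule tendsto_imp_filterlim_at_left)
  then have "filterlim (\<lambda>n. inverse ((a n + z) / (m n)\<^sup>2)) at_bot sequentially"
    by (rule filterlim_compose[OF filterlim_inverse_at_bot_neg])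
  then have "filterlim (\<lambda>n. - ((m n)\<^sup>2 / (a n + z))) at_top sequentially"
    by (simp add: inverse_eq_divide filterlim_uminus_at_bot)
  then have "filterlim (\<lambda>n. z + - ((m n)\<^sup>2 / (a n + z))) at_top sequentially"
    by (rule filterlim_tendsto_add_at_top[OF tendsto_const])
  moreover have "filterlim (\<lambda>n. - a n) at_top sequentially"
    using a by (simp add: filterlim_uminus_at_bot)
  ultimately have "filterlim (\<lambda>n. min (- a n) (z - (m n)\<^sup>2 / (a n + z))) at_top sequentially"
    unfolding filterlim_at_top by (auto intro: eventually_conj)
  then show ?thesis
    by (rule filterlim_at_top_mono) (auto simp: lasso_error_def)
qed

text \<open>The mirror image of the previous lemma, obtained from the oddness of the error.\<close>
lemma lasso_error_at_bot:
  fixes m a :: "nat \<Rightarrow> real"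
  assumes m: "filterlim m at_top sequentially" and a: "filterlim a at_top sequentially"
    and q: "(\<lambda>n. a n / (m n)\<^sup>2) \<longlonglongrightarrow> 0"
  shows "filterlim (\<lambda>n. lasso_error (m n) (a n) z) at_bot sequentially"
proof -
  have "filterlim (\<lambda>n. lasso_error (m n) (- a n) (- z)) at_top sequentially"
  proof (rule lasso_error_at_top[OF m])
    show "filterlim (\<lambda>n. - a n) at_bot sequentially"
      using a by (simp add: filterlim_uminus_at_top[symmetric])
    show "(\<lambda>n. - a n / (m n)\<^sup>2) \<longlonglongrightarrow> 0"
      using tendsto_minus[OF q] by simp
  qed
  then show ?thesis
    by (simp add: lasso_error_minus filterlim_uminus_at_top)
qed

text \<open>If |a_n| dominates m_n, the error is eventually z - m_n^2/(a_n + z), and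
  m_n^2/(a_n + z) has the same limit r as m_n^2/a_n.\<close>
lemma lasso_error_tendsto_shift:
  fixes m a :: "nat \<Rightarrow> real"
  assumes m: "filterlim m at_top sequentially"
    and q: "filterlim (\<lambda>n. \<bar>a n\<bar> / m n) at_top sequentially"
    and r: "(\<lambda>n. (m n)\<^sup>2 / a n) \<longlonglongrightarrow> r"
  shows "(\<lambda>n. lasso_error (m n) (a n) z) \<longlonglongrightarrow> z - r"
proof -
  have "eventually (\<lambda>n. \<bar>a n\<bar> / m n \<ge> 3 \<and> m n \<ge> \<bar>z\<bar> + 1) sequentially"
    using q m by (auto simp: filterlim_at_top intro: eventually_conj)
  then have big: "eventually (\<lambda>n. \<bar>a n\<bar> \<ge> 3 * m n \<and> m n \<ge> \<bar>z\<bar> + 1) sequentially"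
    by eventually_elim (auto simp: pos_le_divide_eq)
  then have outside: "eventually (\<lambda>n. \<bar>a n + z\<bar> > m n \<and> a n \<noteq> 0 \<and> a n + z \<noteq> 0) sequentially"
    by eventually_elim (auto simp: abs_if split: if_splits)
  have "filterlim (\<lambda>n. \<bar>a n\<bar>) at_top sequentially"
    using big by (intro filterlim_at_top_mono[OF m]) (auto elim: eventually_mono)
  then have "filterlim a at_infinity sequentially"
    by (simp add: filterlim_at_infinity_conv_norm_at_top)
  then have denom: "(\<lambda>n. 1 + z / a n) \<longlonglongrightarrow> 1 + 0"
    by (intro tendsto_add tendsto_const tendsto_divide_0[OF tendsto_const])
  have "(\<lambda>n. z - (m n)\<^sup>2 / a n / (1 + z / a n)) \<longlonglongrightarrow> z - r / (1 + 0)"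
    by (intro tendsto_diff tendsto_const tendsto_divide r denom) simp
  moreover have "eventually (\<lambda>n. z - (m n)\<^sup>2 / a n / (1 + z / a n) = lasso_error (m n) (a n) z)
      sequentially"
    using outside by eventually_elim (simp add: lasso_error_def field_simps)
  ultimately show ?thesis by (simp add: tendsto_cong)
qed


lemma scaled_inverse_ratio:
  "sqrt (real n) * (\<mu> n)\<^sup>2 / \<theta> n = (sqrt (real n) * \<mu> n)\<^sup>2 / (sqrt (real n) * \<theta> n)"
  by (cases "n = 0 \<or> \<theta> n = 0") (auto simp: power2_eq_square)

lemma ratio_sq_tendsto_0_of_ratio_tendsto:
  fixes m a :: "nat \<Rightarrow> real"
  assumes m: "filterlim m at_top sequentially" and c: "(\<lambda>n. a n / m n) \<longlonglongrightarrow> c"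
  shows "(\<lambda>n. a n / (m n)\<^sup>2) \<longlonglongrightarrow> 0"
proof -
  have "(\<lambda>n. a n / m n * inverse (m n)) \<longlonglongrightarrow> c * 0"
    by (intro tendsto_mult c tendsto_inverse_0_at_top[OF m])
  then show ?thesis by (simp add: power2_eq_square divide_inverse mult.assoc)
qed

lemma ratio_sq_tendsto_0_of_inverse_diverges:
  fixes m a :: "nat \<Rightarrow> real"
  assumes "filterlim (\<lambda>n. (m n)\<^sup>2 / a n) at_infinity sequentially"
  shows "(\<lambda>n. a n / (m n)\<^sup>2) \<longlonglongrightarrow> 0"
  using filterlim_compose[OF tendsto_inverse_0 assms] by (simp add: inverse_divide)

lemma at_bot_of_ratio_neg:
  fixes m a :: "nat \<Rightarrow> real"
  assumes m: "filterlim m at_top sequentially"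
    and ratio: "(\<lambda>n. ereal (a n / m n)) \<longlonglongrightarrow> \<zeta>" and neg: "\<zeta> < 0"
  shows "filterlim a at_bot sequentially"
proof -
  obtain c where c: "\<zeta> < ereal c" "c < 0"
    using ereal_dense2[OF neg] by (auto simp: zero_ereal_def)
  have "eventually (\<lambda>n. ereal (a n / m n) < ereal c \<and> m n > 0) sequentially"
    using order_tendstoD(2)[OF ratio c(1)] m by (auto simp: filterlim_at_top_dense intro: eventually_conj)
  then have "eventually (\<lambda>n. a n \<le> c * m n) sequentially"
    by eventually_elim (auto simp: divide_less_eq)
  moreover have "filterlim (\<lambda>n. c * m n) at_bot sequentially"
    using filterlim_tendsto_neg_mult_at_bot[OF tendsto_const c(2) m] .
  ultimately show ?thesis by (rule filterlim_at_bot_mono[rotated])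
qed

lemma at_top_of_ratio_pos:
  fixes m a :: "nat \<Rightarrow> real"
  assumes m: "filterlim m at_top sequentially"
    and ratio: "(\<lambda>n. ereal (a n / m n)) \<longlonglongrightarrow> \<zeta>" and pos: "\<zeta> > 0"
  shows "filterlim a at_top sequentially"
proof -
  have "(\<lambda>n. ereal (- a n / m n)) \<longlonglongrightarrow> - \<zeta>" using tendsto_uminus_ereal[OF ratio] by simp
  then have "filterlim (\<lambda>n. - a n) at_bot sequentially"
    using pos by (intro at_bot_of_ratio_neg[OF m]) (auto simp: ereal_uminus_less_reorder)
  then show ?thesis by (simp add: filterlim_uminus_at_top)
qed

lemma abs_ratio_at_top:
  fixes m a :: "nat \<Rightarrow> real"
  assumes m: "filterlim m at_top sequentially"
    and ratio: "(\<lambda>n. ereal (a n / m n)) \<longlonglongrightarrow> \<zeta>" and inf: "\<bar>\<zeta>\<bar> = \<infinity>"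
  shows "filterlim (\<lambda>n. \<bar>a n\<bar> / m n) at_top sequentially"
proof -
  have "filterlim (\<lambda>n. a n / m n) at_infinity sequentially"
  proof (cases "\<zeta> = \<infinity>")
    case True
    then show ?thesis using ratio ereal_tendsto_simps2(2)[of "\<lambda>n. a n / m n"]
      by (auto simp: comp_def intro: filterlim_at_top_imp_at_infinity)
  next
    case False
    with inf have "\<zeta> = - \<infinity>" by (cases \<zeta>) auto
    then show ?thesis using ratio ereal_tendsto_simps2(3)[of "\<lambda>n. a n / m n"]
      by (auto simp: comp_def intro: filterlim_mono[OF _ at_bot_le_at_infinity order_refl])
  qed
  then have lim: "filterlim (\<lambda>n. \<bar>a n / m n\<bar>) at_top sequentially"
    by (simp add: filterlim_at_infinity_conv_norm_at_top)
  have "eventually (\<lambda>n. m n > 0) sequentially"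
    using m by (simp add: filterlim_at_top_dense)
  then have "eventually (\<lambda>n. \<bar>a n / m n\<bar> = \<bar>a n\<bar> / m n) sequentially"
    by eventually_elim (simp add: abs_divide)
  from iffD1[OF filterlim_cong[OF refl refl this] lim] show ?thesis .
qed



subsection \<open>The four limiting regimes\<close>

text \<open>The cdf of a point mass at c is discontinuous at c, so weak convergence to it only
  constrains points x different from c.\<close>
lemma step_cdf_not_continuous:
  fixes c :: real
  shows "\<not> isCont (\<lambda>x. if x \<ge> c then 1 else 0 :: real) c"
proof
  assume "isCont (\<lambda>x. if x \<ge> c then 1 else 0 :: real) c"
  then have "((\<lambda>x. if x \<ge> c then 1 else 0 :: real) \<longlongrightarrow> 1) (at_left c)"
    by (simp add: isCont_def filterlim_at_split)
  moreover have "eventually (\<lambda>x. (if x \<ge> c then 1 else 0 :: real) = 0) (at_left c)"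
    using eventually_at_left_real[of "c - 1" c] by (auto elim: eventually_mono)
  ultimately have "((\<lambda>x. 0 :: real) \<longlongrightarrow> 1) (at_left c)"
    using tendsto_cong by fastforce
  then show False by (simp add: tendsto_const_iff)
qed

lemma F_A_point_mass_limit:
  fixes \<mu> \<theta> :: "nat \<Rightarrow> real"
  assumes mu_rate: "filterlim (\<lambda>n. sqrt (real n) * \<mu> n) at_top sequentially"
    and a: "(\<lambda>n. sqrt (real n) * \<theta> n) \<longlonglongrightarrow> \<nu>"
  shows "weak_conv (\<lambda>n. F_A (\<mu> n) n (\<theta> n)) (\<lambda>x. if x \<ge> - \<nu> then 1 else 0)"
  unfolding weak_conv_def
proof (intro allI impI)
  fix x assume "isCont (\<lambda>x. if x \<ge> - \<nu> then 1 else 0 :: real) x"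
  then have "x \<noteq> - \<nu>" using step_cdf_not_continuous by blast
  then have "(\<lambda>n. F_A (\<mu> n) n (\<theta> n) x) \<longlonglongrightarrow> measure std_normal_distribution {z. - \<nu> \<le> x}"
    by (intro F_A_tendsto_of_pointwise lasso_error_tendsto_const[OF mu_rate a]) auto
  moreover have "measure std_normal_distribution {z. - \<nu> \<le> x} = (if x \<ge> - \<nu> then 1 else 0)"
    using prob_space.prob_space[OF std_normal_prob_space] by auto
  ultimately show "(\<lambda>n. F_A (\<mu> n) n (\<theta> n) x) \<longlonglongrightarrow> (if x \<ge> - \<nu> then 1 else 0)" by simp
qed

context
  fixes \<mu> \<theta> :: "nat \<Rightarrow> real" and \<zeta> :: ereal
  assumes mu_rate: "filterlim (\<lambda>n. sqrt (real n) * \<mu> n) at_top sequentially"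
    and zeta: "(\<lambda>n. ereal (\<theta> n / \<mu> n)) \<longlonglongrightarrow> \<zeta>"
begin

text \<open>a_n/m_n = theta_n/mu_n for n > 0, so the rescaled ratio also tends to zeta.\<close>
lemma scaled_ratio_tendsto:
  "(\<lambda>n. ereal (sqrt (real n) * \<theta> n / (sqrt (real n) * \<mu> n))) \<longlonglongrightarrow> \<zeta>"
proof -
  have "eventually (\<lambda>n. ereal (\<theta> n / \<mu> n)
      = ereal (sqrt (real n) * \<theta> n / (sqrt (real n) * \<mu> n))) sequentially"
    unfolding eventually_sequentially by (auto intro!: exI[of _ 1])
  with zeta show ?thesis by (rule Lim_transform_eventually)
qed

text \<open>Part 2: the three regimes in which a_n -> -oo with a_n/m_n^2 -> 0, so all mass
  escapes to +oo.\<close>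
lemma F_A_tendsto_0:
  assumes "(- \<infinity> < \<zeta> \<and> \<zeta> < 0)
        \<or> (\<zeta> = 0 \<and> filterlim (\<lambda>n. sqrt (real n) * \<theta> n) at_bot sequentially)
        \<or> (\<zeta> = - \<infinity> \<and> filterlim (\<lambda>n. sqrt (real n) * (\<mu> n)\<^sup>2 / \<theta> n) at_bot sequentially)"
  shows "(\<lambda>n. F_A (\<mu> n) n (\<theta> n) x) \<longlonglongrightarrow> 0"
proof -
  define m a where "m = (\<lambda>n. sqrt (real n) * \<mu> n)" and "a = (\<lambda>n. sqrt (real n) * \<theta> n)"
  have m: "filterlim m at_top sequentially" using mu_rate by (simp add: m_def)
  have ratio: "(\<lambda>n. ereal (a n / m n)) \<longlonglongrightarrow> \<zeta>" using scaled_ratio_tendsto by (simp add: m_def a_def)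
  have a: "filterlim a at_bot sequentially"
    using assms at_bot_of_ratio_neg[OF m ratio] by (auto simp: a_def)
  have q: "(\<lambda>n. a n / (m n)\<^sup>2) \<longlonglongrightarrow> 0"
  proof (cases "\<zeta> = - \<infinity>")
    case True
    with assms have "filterlim (\<lambda>n. (m n)\<^sup>2 / a n) at_bot sequentially"
      by (simp add: m_def a_def scaled_inverse_ratio)
    then show ?thesis
      by (intro ratio_sq_tendsto_0_of_inverse_diverges filterlim_mono[OF _ at_bot_le_at_infinity]) auto
  next
    case False
    with assms obtain c where "\<zeta> = ereal c" by (cases \<zeta>) auto
    with ratio show ?thesis by (intro ratio_sq_tendsto_0_of_ratio_tendsto[OF m]) simp
  qed
  show ?thesis
    using lasso_error_at_top[OF m a q] by (intro F_A_tendsto_0_of_error_at_top) (simp add: m_def a_def)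
qed

text \<open>Part 2, mirrored: a_n -> +oo with a_n/m_n^2 -> 0, so all mass escapes to -oo.\<close>
lemma F_A_tendsto_1:
  assumes "(0 < \<zeta> \<and> \<zeta> < \<infinity>)
        \<or> (\<zeta> = 0 \<and> filterlim (\<lambda>n. sqrt (real n) * \<theta> n) at_top sequentially)
        \<or> (\<zeta> = \<infinity> \<and> filterlim (\<lambda>n. sqrt (real n) * (\<mu> n)\<^sup>2 / \<theta> n) at_top sequentially)"
  shows "(\<lambda>n. F_A (\<mu> n) n (\<theta> n) x) \<longlonglongrightarrow> 1"
proof -
  define m a where "m = (\<lambda>n. sqrt (real n) * \<mu> n)" and "a = (\<lambda>n. sqrt (real n) * \<theta> n)"
  have m: "filterlim m at_top sequentially" using mu_rate by (simp add: m_def)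
  have ratio: "(\<lambda>n. ereal (a n / m n)) \<longlonglongrightarrow> \<zeta>" using scaled_ratio_tendsto by (simp add: m_def a_def)
  have a: "filterlim a at_top sequentially"
    using assms at_top_of_ratio_pos[OF m ratio] by (auto simp: a_def)
  have q: "(\<lambda>n. a n / (m n)\<^sup>2) \<longlonglongrightarrow> 0"
  proof (cases "\<zeta> = \<infinity>")
    case True
    with assms have "filterlim (\<lambda>n. (m n)\<^sup>2 / a n) at_top sequentially"
      by (simp add: m_def a_def scaled_inverse_ratio)
    then show ?thesis
      by (intro ratio_sq_tendsto_0_of_inverse_diverges filterlim_at_top_imp_at_infinity)
  next
    case False
    with assms obtain c where "\<zeta> = ereal c" by (cases \<zeta>) auto
    with ratio show ?thesis by (intro ratio_sq_tendsto_0_of_ratio_tendsto[OF m]) simp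
  qed
  show ?thesis
    using lasso_error_at_bot[OF m a q] by (intro F_A_tendsto_1_of_error_at_bot) (simp add: m_def a_def)
qed

lemma F_A_normal_limit:
  assumes inf: "\<bar>\<zeta>\<bar> = \<infinity>" and r: "(\<lambda>n. sqrt (real n) * (\<mu> n)\<^sup>2 / \<theta> n) \<longlonglongrightarrow> r"
  shows "weak_conv (\<lambda>n. F_A (\<mu> n) n (\<theta> n)) (\<lambda>x. Phi (x + r))"
  unfolding weak_conv_def
proof (intro allI impI)
  fix x
  define m a where "m = (\<lambda>n. sqrt (real n) * \<mu> n)" and "a = (\<lambda>n. sqrt (real n) * \<theta> n)"
  have m: "filterlim m at_top sequentially" using mu_rate by (simp add: m_def)
  have ratio: "(\<lambda>n. ereal (a n / m n)) \<longlonglongrightarrow> \<zeta>" using scaled_ratio_tendsto by (simp add: m_def a_def)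
  have "(\<lambda>n. (m n)\<^sup>2 / a n) \<longlonglongrightarrow> r" using r by (simp add: m_def a_def scaled_inverse_ratio)
  from lasso_error_tendsto_shift[OF m abs_ratio_at_top[OF m ratio inf] this]
  have "(\<lambda>n. F_A (\<mu> n) n (\<theta> n) x) \<longlonglongrightarrow> measure std_normal_distribution {z. z - r \<le> x}"
    using std_normal_no_atoms[of "x + r"]
    by (intro F_A_tendsto_of_pointwise) (auto simp: m_def a_def elim: eventually_mono)
  moreover have "measure std_normal_distribution {z. z - r \<le> x} = Phi (x + r)"
    unfolding Phi_def cdf_def2 by (intro arg_cong[where f="measure _"]) auto
  ultimately show "(\<lambda>n. F_A (\<mu> n) n (\<theta> n) x) \<longlonglongrightarrow> Phi (x + r)" by simp
qed

end

theorem theorem3: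
  fixes \<mu> \<theta> :: "nat \<Rightarrow> real" and \<zeta> :: ereal
  assumes mu_pos: "\<And>n. \<mu> n > 0"
    and mu_lim: "\<mu> \<longlonglongrightarrow> 0"
    and mu_rate: "filterlim (\<lambda>n. sqrt (real n) * \<mu> n) at_top sequentially"
    and zeta: "(\<lambda>n. ereal (\<theta> n / \<mu> n)) \<longlonglongrightarrow> \<zeta>"
  shows
    "(\<forall>\<nu>::real. \<zeta> = 0 \<and> (\<lambda>n. sqrt (real n) * \<theta> n) \<longlonglongrightarrow> \<nu> \<longrightarrow>
        weak_conv (\<lambda>n. F_A (\<mu> n) n (\<theta> n)) (\<lambda>x. if x \<ge> - \<nu> then 1 else 0))
   \<and> (((- \<infinity> < \<zeta> \<and> \<zeta> < 0)
        \<or> (\<zeta> = 0 \<and> filterlim (\<lambda>n. sqrt (real n) * \<theta> n) at_bot sequentially)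
        \<or> (\<zeta> = - \<infinity> \<and> filterlim (\<lambda>n. sqrt (real n) * (\<mu> n)\<^sup>2 / \<theta> n) at_bot sequentially))
      \<longrightarrow> (\<forall>x. (\<lambda>n. F_A (\<mu> n) n (\<theta> n) x) \<longlonglongrightarrow> 0))
   \<and> (((0 < \<zeta> \<and> \<zeta> < \<infinity>)
        \<or> (\<zeta> = 0 \<and> filterlim (\<lambda>n. sqrt (real n) * \<theta> n) at_top sequentially)
        \<or> (\<zeta> = \<infinity> \<and> filterlim (\<lambda>n. sqrt (real n) * (\<mu> n)\<^sup>2 / \<theta> n) at_top sequentially))
      \<longrightarrow> (\<forall>x. (\<lambda>n. F_A (\<mu> n) n (\<theta> n) x) \<longlonglongrightarrow> 1))
   \<and> (\<forall>r::real. \<bar>\<zeta>\<bar> = \<infinity> \<and> (\<lambda>n. sqrt (real n) * (\<mu> n)\<^sup>2 / \<theta> n) \<longlonglongrightarrow> r \<longrightarrow>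
        weak_conv (\<lambda>n. F_A (\<mu> n) n (\<theta> n)) (\<lambda>x. Phi (x + r)))"
proof (intro conjI allI impI)
  fix \<nu> :: real
  assume "\<zeta> = 0 \<and> (\<lambda>n. sqrt (real n) * \<theta> n) \<longlonglongrightarrow> \<nu>"
  then show "weak_conv (\<lambda>n. F_A (\<mu> n) n (\<theta> n)) (\<lambda>x. if x \<ge> - \<nu> then 1 else 0)"
    by (intro F_A_point_mass_limit[OF mu_rate]) simp
next
  fix r :: real
  assume "\<bar>\<zeta>\<bar> = \<infinity> \<and> (\<lambda>n. sqrt (real n) * (\<mu> n)\<^sup>2 / \<theta> n) \<longlonglongrightarrow> r"
  then show "weak_conv (\<lambda>n. F_A (\<mu> n) n (\<theta> n)) (\<lambda>x. Phi (x + r))"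
    by (intro F_A_normal_limit[OF mu_rate zeta]) simp_all
qed (fact F_A_tendsto_0[OF mu_rate zeta] F_A_tendsto_1[OF mu_rate zeta])+

end
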